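(* Let $a_1, \dots, a_n \in \mathbb{Z}^d$ be pairwise distinct primitive integer vectors, let $D \subseteq (0,\infty)$ be a dense subset, and for each $w \in \mathbb{Z}^d$ let $f_w : \mathbb{R} \to \mathbb{R}$ be a function. Then there is at most one tuple of real numbers $(b_1, \dots, b_n)$ such that: $P = \bigcap_{i=1}^n \{x \in \mathbb{R}^d : \langle a_i, x\rangle \le b_i\}$ is a full-dimensional polytope; $f_w(s) = L_{P+w}(s)$ for all $w \in \mathbb{Z}^d$ and all $s \in D$; and for each $i$ the set $F_i = P \cap \{x : \langle a_i, x\rangle = b_i\}$ is a nonempty face of $P$.
   Context: For a polytope $P \subseteq \mathbb{R}^d$ and real $s \ge 0$, $L_P(s) = \#(sP \cap \mathbb{Z}^d)$, where $sP = \{sx : x \in P\}$. A vector $a \in \mathbb{Z}^d$ is primitive if the greatest common divisor of its coordinates is $1$. *)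

theory Defs
  imports "HOL-Analysis.Analysis"
begin

definition real_of_intvec :: "int^'d \<Rightarrow> real^'d" where
  "real_of_intvec z = (\<chi> j. of_int (z $ j))"

definition primitive :: "int^'d \<Rightarrow> bool" where
  "primitive a \<longleftrightarrow> Gcd (range (\<lambda>j. a $ j)) = 1"

text \<open>L_P(s) = number of integer points in the dilate sP.\<close>
definition lattice_count :: "(real^'d) set \<Rightarrow> real \<Rightarrow> nat" where
  "lattice_count P s = card {z :: int^'d. real_of_intvec z \<in> (\<lambda>x. s *\<^sub>R x) ` P}"

definition translate :: "(real^'d) set \<Rightarrow> int^'d \<Rightarrow> (real^'d) set" where
  "translate P w = (\<lambda>x. x + real_of_intvec w) ` P"

definition hpoly :: "nat \<Rightarrow> (nat \<Rightarrow> int^'d) \<Rightarrow> (nat \<Rightarrow> real) \<Rightarrow> (real^'d) set" where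
  "hpoly n a b = (\<Inter>i\<in>{..<n}. {x. real_of_intvec (a i) \<bullet> x \<le> b i})"

end

theory Submission
  imports Defs
begin

text \<open>Two compact sets whose integer translates have the same lattice point counts at all dilation
factors in \<open>D\<close> coincide once one of them is a convex body. Otherwise a small ball \<open>B\<close> lies in one
set and misses the other. For an integer \<open>N\<close> exceeding the diameter and \<open>1/s = N + e\<close> with \<open>s \<in> D\<close>
and \<open>e > 0\<close> small, the points \<open>(1/s) z - N z = e z\<close>, \<open>z\<close> integral, form a grid so fine that one of
them lies in \<open>B\<close>; translating by \<open>-N z\<close> and dilating by \<open>s\<close> makes \<open>z\<close> the only lattice point that
can be counted, so the two counts are \<open>1\<close> and \<open>0\<close>. Equal polytopes then have equal offsets \<open>b\<^sub>i\<close>,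
because every bounding hyperplane touches the polytope.\<close>

lemma interior_nonempty_if_full_aff_dim:
  fixes S :: "'a::euclidean_space set"
  assumes "convex S" and "aff_dim S = int DIM('a)"
  shows "interior S \<noteq> {}"
proof -
  have "S \<noteq> {}"
    using assms(2) by auto
  then show ?thesis
    using assms rel_interior_eq_empty[of S] by (simp add: interior_rel_interior_gen)
qed

lemma mem_dilate_translate_iff:
  fixes P :: "(real^'d) set"
  assumes "s > 0"
  shows "real_of_intvec u \<in> (\<lambda>x. s *\<^sub>R x) ` translate P w \<longleftrightarrow>
    (1/s) *\<^sub>R real_of_intvec u - real_of_intvec w \<in> P"
proof
  assume "real_of_intvec u \<in> (\<lambda>x. s *\<^sub>R x) ` translate P w"
  then obtain x where "x \<in> P" "real_of_intvec u = s *\<^sub>R (x + real_of_intvec w)"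
    unfolding translate_def by auto
  then show "(1/s) *\<^sub>R real_of_intvec u - real_of_intvec w \<in> P"
    using assms by simp
next
  assume "(1/s) *\<^sub>R real_of_intvec u - real_of_intvec w \<in> P"
  moreover have "real_of_intvec u =
      s *\<^sub>R (((1/s) *\<^sub>R real_of_intvec u - real_of_intvec w) + real_of_intvec w)"
    using assms by simp
  ultimately show "real_of_intvec u \<in> (\<lambda>x. s *\<^sub>R x) ` translate P w"
    unfolding translate_def by blast
qed

lemma intvec_eq_if_dilates_close:
  fixes u v w :: "int^'d"
  assumes "t > 2 * R"
    and "norm (t *\<^sub>R real_of_intvec u - real_of_intvec w) \<le> R"
    and "norm (t *\<^sub>R real_of_intvec v - real_of_intvec w) \<le> R"
  shows "u = v"
proof (rule ccontr)
  assume "u \<noteq> v"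
  then obtain j where "u $ j \<noteq> v $ j"
    by (metis vec_eq_iff)
  then have gap: "\<bar>real_of_int (u $ j) - real_of_int (v $ j)\<bar> \<ge> 1"
    by linarith
  have "t > 0"
    using assms(1,2) norm_ge_zero[of "t *\<^sub>R real_of_intvec u - real_of_intvec w"] by linarith
  have "t \<le> \<bar>t * (real_of_int (u $ j) - real_of_int (v $ j))\<bar>"
    using gap \<open>t > 0\<close> by (simp add: abs_mult)
  also have "\<dots> = \<bar>(t *\<^sub>R real_of_intvec u - t *\<^sub>R real_of_intvec v) $ j\<bar>"
    by (simp add: real_of_intvec_def algebra_simps)
  also have "\<dots> \<le> norm (t *\<^sub>R real_of_intvec u - t *\<^sub>R real_of_intvec v)"
    by (rule component_le_norm_cart)
  also have "\<dots> = norm ((t *\<^sub>R real_of_intvec u - real_of_intvec w)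
      - (t *\<^sub>R real_of_intvec v - real_of_intvec w))"
    by simp
  also have "\<dots> \<le> norm (t *\<^sub>R real_of_intvec u - real_of_intvec w)
      + norm (t *\<^sub>R real_of_intvec v - real_of_intvec w)"
    by (rule norm_triangle_ineq4)
  finally show False
    using assms by linarith
qed

lemma lattice_count_translate_isolated:
  fixes P :: "(real^'d) set" and z w :: "int^'d"
  assumes "s > 0" and "1/s > 2 * R"
    and "\<forall>y\<in>P. norm y \<le> R"
    and "norm ((1/s) *\<^sub>R real_of_intvec z - real_of_intvec w) \<le> R"
  shows "lattice_count (translate P w) s =
    (if (1/s) *\<^sub>R real_of_intvec z - real_of_intvec w \<in> P then 1 else 0)"
proof -
  have "real_of_intvec u \<in> (\<lambda>x. s *\<^sub>R x) ` translate P w \<longleftrightarrow>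
      u = z \<and> (1/s) *\<^sub>R real_of_intvec z - real_of_intvec w \<in> P" for u
  proof -
    have "u = z" if "(1/s) *\<^sub>R real_of_intvec u - real_of_intvec w \<in> P"
      using intvec_eq_if_dilates_close[OF assms(2)] that assms(3,4) by blast
    then show ?thesis
      using mem_dilate_translate_iff[OF assms(1)] by blast
  qed
  then have "{u. real_of_intvec u \<in> (\<lambda>x. s *\<^sub>R x) ` translate P w} =
      (if (1/s) *\<^sub>R real_of_intvec z - real_of_intvec w \<in> P then {z} else {})"
    by auto
  then show ?thesis
    unfolding lattice_count_def by simp
qed

lemma exists_intvec_grid_point_near:
  fixes x :: "real^'d"
  assumes "e > 0"
  shows "\<exists>z :: int^'d. norm (e *\<^sub>R real_of_intvec z - x) < real CARD('d) * e"
proof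
  define z :: "int^'d" where "z = (\<chi> j. \<lfloor>x $ j / e\<rfloor>)"
  have "\<bar>(e *\<^sub>R real_of_intvec z - x) $ j\<bar> < e" for j
  proof -
    have "real_of_int (z $ j) \<le> x $ j / e" "x $ j / e < real_of_int (z $ j) + 1"
      by (auto simp: z_def)
    then have "e * real_of_int (z $ j) \<le> x $ j" "x $ j < e * real_of_int (z $ j) + e"
      using assms by (auto simp: field_simps)
    then show ?thesis
      by (simp add: real_of_intvec_def)
  qed
  then have "(\<Sum>j\<in>UNIV. \<bar>(e *\<^sub>R real_of_intvec z - x) $ j\<bar>) < (\<Sum>j\<in>(UNIV::'d set). e)"
    by (intro sum_strict_mono) auto
  also have "\<dots> = real CARD('d) * e"
    by simp
  finally show "norm (e *\<^sub>R real_of_intvec z - x) < real CARD('d) * e"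
    using norm_le_l1_cart[of "e *\<^sub>R real_of_intvec z - x"] by linarith
qed

lemma dense_pos_meets_interval:
  fixes D :: "real set"
  assumes "{0<..} \<subseteq> closure D" and "0 \<le> \<alpha>" and "\<alpha> < \<beta>"
  shows "\<exists>s\<in>D. \<alpha> < s \<and> s < \<beta>"
proof -
  obtain m where "\<alpha> < m" "m < \<beta>"
    using assms(3) dense by blast
  moreover have "m \<in> closure D"
    using assms(1,2) \<open>\<alpha> < m\<close> by auto
  ultimately have "{\<alpha><..<\<beta>} \<inter> closure D \<noteq> {}"
    by auto
  then have "{\<alpha><..<\<beta>} \<inter> D \<noteq> {}"
    using open_Int_closure_eq_empty[of "{\<alpha><..<\<beta>}" D] by auto
  then show ?thesis
    by auto
qed

lemma ball_in_diff_if_not_subset: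
  fixes P P' :: "'a::euclidean_space set"
  assumes "convex P" and "interior P \<noteq> {}" and "closed P'" and "\<not> P \<subseteq> P'"
  shows "\<exists>x0 r. r > 0 \<and> ball x0 r \<subseteq> P - P'"
proof -
  obtain x where x: "x \<in> P" "x \<notin> P'"
    using assms(4) by auto
  obtain r1 where "r1 > 0" and r1: "ball x r1 \<subseteq> - P'"
    using assms(3) x(2) open_contains_ball by (metis open_Compl ComplI)
  have "x \<in> closure (interior P)"
    using convex_closure_interior[OF assms(1,2)] x(1) closure_subset by blast
  then obtain x0 where "x0 \<in> interior P" and "dist x0 x < r1/2"
    using \<open>r1 > 0\<close> closure_approachable by (metis half_gt_zero)
  moreover obtain r2 where "r2 > 0" "ball x0 r2 \<subseteq> P"
    using \<open>x0 \<in> interior P\<close> by (metis mem_interior)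
  moreover have "ball x0 (r1/2) \<subseteq> ball x r1"
  proof
    fix v assume "v \<in> ball x0 (r1/2)"
    then show "v \<in> ball x r1"
      using \<open>dist x0 x < r1/2\<close> dist_triangle[of x v x0] by (simp add: dist_commute)
  qed
  ultimately have "ball x0 (min r2 (r1/2)) \<subseteq> P - P'"
    using r1 by auto
  then show ?thesis
    using \<open>r1 > 0\<close> \<open>r2 > 0\<close> by (metis half_gt_zero min_less_iff_conj)
qed

lemma subset_if_lattice_counts_eq:
  fixes P P' :: "(real^'d) set" and D :: "real set"
  assumes "compact P" "convex P" "interior P \<noteq> {}" "compact P'"
    and D_pos: "D \<subseteq> {0<..}" and D_dense: "{0<..} \<subseteq> closure D"
    and counts_eq: "\<forall>w. \<forall>s\<in>D. lattice_count (translate P w) s = lattice_count (translate P' w) s"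
  shows "P \<subseteq> P'"
proof (rule ccontr)
  assume "\<not> P \<subseteq> P'"
  then obtain x0 r where "r > 0" and ball: "ball x0 r \<subseteq> P - P'"
    using ball_in_diff_if_not_subset assms(2,3) compact_imp_closed[OF assms(4)] by blast
  obtain R where "R > 0" and R: "\<forall>y\<in>P \<union> P'. norm y \<le> R"
    using assms(1,4) by (metis bounded_pos compact_imp_bounded bounded_Un)
  define N :: nat where "N = nat \<lceil>2 * R\<rceil> + 1"
  have N: "real N > 2 * R"
    unfolding N_def by linarith
  define e0 where "e0 = r / real CARD('d)"
  have "e0 > 0"
    using \<open>r > 0\<close> by (simp add: e0_def)
  obtain s where "s \<in> D" and s: "1 / (real N + e0) < s" "s < 1 / real N"
    using dense_pos_meets_interval[OF D_dense, of "1 / (real N + e0)" "1 / real N"]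
      N \<open>R > 0\<close> \<open>e0 > 0\<close> by (auto simp: frac_less2)
  have "s > 0"
    using \<open>s \<in> D\<close> D_pos by auto
  define e where "e = 1/s - real N"
  have "0 < e" "e < e0"
    using s \<open>s > 0\<close> N \<open>R > 0\<close> \<open>e0 > 0\<close> by (auto simp: e_def field_simps)
  obtain z :: "int^'d" where z: "norm (e *\<^sub>R real_of_intvec z - x0) < real CARD('d) * e"
    using exists_intvec_grid_point_near[OF \<open>0 < e\<close>] by blast
  \<comment> \<open>Translating by the integer vector \<open>N z\<close> turns the dilate \<open>(1/s) z\<close> into the fine grid point \<open>e z\<close>.\<close>
  define w :: "int^'d" where "w = (\<chi> j. int N * z $ j)"
  have y: "(1/s) *\<^sub>R real_of_intvec z - real_of_intvec w = e *\<^sub>R real_of_intvec z"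
    by (simp add: vec_eq_iff real_of_intvec_def w_def e_def algebra_simps)
  have "real CARD('d) * e \<le> r"
    using \<open>e < e0\<close> by (simp add: e0_def field_simps)
  then have "e *\<^sub>R real_of_intvec z \<in> ball x0 r"
    using z by (simp add: dist_norm norm_minus_commute)
  then have in_P: "e *\<^sub>R real_of_intvec z \<in> P" and not_in_P': "e *\<^sub>R real_of_intvec z \<notin> P'"
    using ball by auto
  have "1/s > 2 * R"
    using N \<open>0 < e\<close> by (simp add: e_def)
  moreover have "norm ((1/s) *\<^sub>R real_of_intvec z - real_of_intvec w) \<le> R"
    unfolding y using in_P R by blast
  ultimately have "lattice_count (translate P w) s = 1" "lattice_count (translate P' w) s = 0"
    using lattice_count_translate_isolated[OF \<open>s > 0\<close>, of R _ z w] R in_P not_in_P' y by auto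
  then show False
    using counts_eq \<open>s \<in> D\<close> by auto
qed

lemma hpoly_offsets_eq:
  assumes "hpoly n a b = hpoly n a b'" and "i < n"
    and "hpoly n a b \<inter> {x. real_of_intvec (a i) \<bullet> x = b i} \<noteq> {}"
    and "hpoly n a b' \<inter> {x. real_of_intvec (a i) \<bullet> x = b' i} \<noteq> {}"
  shows "b i = b' i"
proof -
  obtain x where x: "x \<in> hpoly n a b" "real_of_intvec (a i) \<bullet> x = b i"
    using assms(3) by blast
  obtain x' where x': "x' \<in> hpoly n a b'" "real_of_intvec (a i) \<bullet> x' = b' i"
    using assms(4) by blast
  have "real_of_intvec (a i) \<bullet> x \<le> b' i" "real_of_intvec (a i) \<bullet> x' \<le> b i"
    using x(1) x'(1) assms(1,2) unfolding hpoly_def by auto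
  then show ?thesis
    using x(2) x'(2) by linarith
qed

theorem theorem4p3:
  fixes n :: nat
    and a :: "nat \<Rightarrow> int^'d"
    and D :: "real set"
    and f :: "int^'d \<Rightarrow> real \<Rightarrow> real"
  assumes prim: "\<forall>i<n. primitive (a i)"
    and distinct: "\<forall>i<n. \<forall>j<n. i \<noteq> j \<longrightarrow> a i \<noteq> a j"
    and D_pos: "D \<subseteq> {0<..}"
    and D_dense: "{0<..} \<subseteq> closure D"
  shows "\<forall>b b' :: nat \<Rightarrow> real.
    (polytope (hpoly n a b) \<and> aff_dim (hpoly n a b) = int CARD('d) \<and>
     (\<forall>w. \<forall>s\<in>D. f w s = real (lattice_count (translate (hpoly n a b) w) s)) \<and>
     (\<forall>i<n. hpoly n a b \<inter> {x. real_of_intvec (a i) \<bullet> x = b i} \<noteq> {} \<and>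
            (hpoly n a b \<inter> {x. real_of_intvec (a i) \<bullet> x = b i}) face_of hpoly n a b))
    \<and>
    (polytope (hpoly n a b') \<and> aff_dim (hpoly n a b') = int CARD('d) \<and>
     (\<forall>w. \<forall>s\<in>D. f w s = real (lattice_count (translate (hpoly n a b') w) s)) \<and>
     (\<forall>i<n. hpoly n a b' \<inter> {x. real_of_intvec (a i) \<bullet> x = b' i} \<noteq> {} \<and>
            (hpoly n a b' \<inter> {x. real_of_intvec (a i) \<bullet> x = b' i}) face_of hpoly n a b'))
    \<longrightarrow> (\<forall>i<n. b i = b' i)"
proof (rule allI, rule allI, rule impI, elim conjE)
  fix b b' :: "nat \<Rightarrow> real"
  let ?P = "hpoly n a b" and ?P' = "hpoly n a b'"
  assume P: "polytope ?P" "aff_dim ?P = int CARD('d)"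
    and f_P: "\<forall>w. \<forall>s\<in>D. f w s = real (lattice_count (translate ?P w) s)"
    and touch: "\<forall>i<n. ?P \<inter> {x. real_of_intvec (a i) \<bullet> x = b i} \<noteq> {} \<and>
      (?P \<inter> {x. real_of_intvec (a i) \<bullet> x = b i}) face_of ?P"
    and P': "polytope ?P'" "aff_dim ?P' = int CARD('d)"
    and f_P': "\<forall>w. \<forall>s\<in>D. f w s = real (lattice_count (translate ?P' w) s)"
    and touch': "\<forall>i<n. ?P' \<inter> {x. real_of_intvec (a i) \<bullet> x = b' i} \<noteq> {} \<and>
      (?P' \<inter> {x. real_of_intvec (a i) \<bullet> x = b' i}) face_of ?P'"
  have body: "compact Q" "convex Q" "interior Q \<noteq> {}"
    if "polytope Q" "aff_dim Q = int CARD('d)" for Q :: "(real^'d) set"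
    using that polytope_imp_compact polytope_imp_convex interior_nonempty_if_full_aff_dim[of Q]
    by auto
  have counts: "\<forall>w. \<forall>s\<in>D. lattice_count (translate ?P w) s = lattice_count (translate ?P' w) s"
    using f_P f_P' by simp
  have "?P \<subseteq> ?P'"
    using subset_if_lattice_counts_eq[OF body[OF P] body(1)[OF P'] D_pos D_dense counts] .
  moreover have "?P' \<subseteq> ?P"
    using subset_if_lattice_counts_eq[OF body[OF P'] body(1)[OF P] D_pos D_dense] counts by simp
  ultimately have "?P = ?P'"
    by (rule subset_antisym)
  show "\<forall>i<n. b i = b' i"
  proof (intro allI impI)
    fix i assume "i < n"
    then show "b i = b' i"
      using hpoly_offsets_eq[OF \<open>?P = ?P'\<close>] touch touch' by blast
  qed
qed

end
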